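(* Let $x,y\in\mathbb{R}$ with $x^2+y^2=1$, let $0<\alpha\le1/2$, and let $x_0,y_0\in\mathbb{R}$ satisfy $|x-x_0|\le\alpha$ and $|y-y_0|\le\alpha$. Then $$|\phi(x,y)-\phi(x_0,y_0)|_{2\pi}\le\arcsin(\alpha)+\arcsin\Bigl(\frac{\alpha}{1-\alpha}\Bigr).$$
   Context: For $(u,v)\neq(0,0)$, $\phi(u,v)$ denotes the polar angle of the point $(u,v)$ (i.e. $u=r\cos\phi$, $v=r\sin\phi$ with $r>0$), defined modulo $2\pi$. For angles $a,b$, $|a-b|_{2\pi}=\min\bigl((a-b)\bmod 2\pi,\,(b-a)\bmod 2\pi\bigr)$. *)

theory Defs
  imports "HOL-Analysis.Analysis"
begin

text \<open>Polar angle of (u,v) \<noteq> (0,0), taking the representative in (-pi, pi];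
  it is only used modulo 2 pi via circ_dist, so the choice of representative is irrelevant.\<close>
definition polar_angle :: "real \<Rightarrow> real \<Rightarrow> real" where
  "polar_angle u v = Arg (Complex u v)"

definition real_modulo :: "real \<Rightarrow> real \<Rightarrow> real" where
  "real_modulo a m = a - m * of_int \<lfloor>a / m\<rfloor>"

definition circ_dist :: "real \<Rightarrow> real \<Rightarrow> real" where
  "circ_dist a b = min (real_modulo (a - b) (2*pi)) (real_modulo (b - a) (2*pi))"

end

theory Submission
  imports Defs
begin

text \<open>For a unit vector \<open>z\<close> and any \<open>w\<close>, the identity
  \<open>2 \<langle>z, w\<rangle> = 1 + |w|\<^sup>2 - |z - w|\<^sup>2\<close> and AM-GM give \<open>\<langle>z, w\<rangle> \<ge> (1 - |z - w|\<^sup>2) |w|\<close>,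
  i.e. the cosine of the angle between \<open>z\<close> and \<open>w\<close> is at least \<open>1 - |z - w|\<^sup>2 \<ge> 1 - 2\<alpha>\<^sup>2\<close>.
  The circular distance of two angles lies in \<open>[0, \<pi>]\<close> and has the same cosine as their
  difference, so it is at most \<open>arccos (1 - 2\<alpha>\<^sup>2) = 2 arcsin \<alpha>\<close>, which is below the
  claimed bound because \<open>\<alpha> \<le> \<alpha> / (1 - \<alpha>)\<close>.\<close>

lemma real_modulo_bounds:
  assumes "0 < m"
  shows "0 \<le> real_modulo a m" "real_modulo a m < m"
  using floor_divide_lower[OF assms, of a] floor_divide_upper[OF assms, of a]
  by (simp_all add: real_modulo_def algebra_simps)

lemma cos_real_modulo_2pi: "cos (real_modulo a (2 * pi)) = cos a"
  by (simp add: real_modulo_def cos_diff)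

lemma real_modulo_add_uminus:
  assumes "0 < m"
  shows "real_modulo a m + real_modulo (- a) m \<in> {0, m}"
proof -
  define j where "j = - (\<lfloor>a / m\<rfloor> + \<lfloor>- a / m\<rfloor>)"
  have sum: "real_modulo a m + real_modulo (- a) m = m * of_int j"
    by (simp add: real_modulo_def j_def algebra_simps)
  have "m * 0 \<le> m * of_int j" "m * of_int j < m * 2"
    using real_modulo_bounds[OF assms, of a] real_modulo_bounds[OF assms, of "- a"] sum
    by linarith+
  then have "0 \<le> j" "j < 2"
    using assms
    by (simp_all only: mult_le_cancel_left_pos mult_less_cancel_left_pos
        of_int_0_le_iff of_int_less_numeral_iff)
  then have "j = 0 \<or> j = 1" by linarith
  with sum show ?thesis by auto
qed

lemma circ_dist_nonneg: "0 \<le> circ_dist a b"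
  using real_modulo_bounds[of "2 * pi"] by (simp add: circ_dist_def)

lemma circ_dist_le_pi: "circ_dist a b \<le> pi"
proof -
  have "real_modulo (a - b) (2 * pi) + real_modulo (b - a) (2 * pi) \<le> 2 * pi"
    using real_modulo_add_uminus[of "2 * pi" "a - b"] by auto
  then show ?thesis
    unfolding circ_dist_def by linarith
qed

lemma cos_circ_dist: "cos (circ_dist a b) = cos (a - b)"
  using cos_minus[of "a - b"] by (simp add: circ_dist_def min_def cos_real_modulo_2pi)

lemma circ_dist_le_iff_cos:
  assumes "0 \<le> \<beta>" "\<beta> \<le> pi"
  shows "circ_dist a b \<le> \<beta> \<longleftrightarrow> cos \<beta> \<le> cos (a - b)"
  using cos_mono_le_eq[of \<beta> "circ_dist a b"] assms circ_dist_nonneg circ_dist_le_pi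
  by (simp add: cos_circ_dist)

lemma inner_ge_of_norm_diff_le:
  fixes z w :: "'a::real_inner"
  assumes "norm z = 1" "(norm (z - w))\<^sup>2 \<le> \<rho>" "\<rho> \<le> 1"
  shows "(1 - \<rho>) * norm w \<le> inner z w"
proof -
  have "(norm (z - w))\<^sup>2 = (norm z)\<^sup>2 - 2 * inner z w + (norm w)\<^sup>2"
    by (simp add: power2_norm_eq_inner inner_diff inner_commute)
  with assms have "(norm w)\<^sup>2 + (1 - \<rho>) \<le> 2 * inner z w"
    by simp
  moreover have "2 * ((1 - \<rho>) * norm w) \<le> (norm w)\<^sup>2 + (1 - \<rho>)"
    \<comment> \<open>AM-GM gives the bound with \<open>sqrt (1 - \<rho>)\<close>; since \<open>1 - \<rho> \<le> 1\<close> it holds with \<open>1 - \<rho>\<close>\<close>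
  proof -
    have "0 \<le> \<rho>" using assms(2) zero_le_power2 order_trans by blast
    with assms(3) have "0 \<le> (norm w - (1 - \<rho>))\<^sup>2 + \<rho> * (1 - \<rho>)"
      by simp
    then show ?thesis by (simp add: power2_eq_square algebra_simps)
  qed
  ultimately show ?thesis by linarith
qed

lemma norm_mult_cos_Arg_diff: "cmod z * cmod w * cos (Arg z - Arg w) = inner z w"
proof -
  have "Re z = cmod z * cos (Arg z)" "Im z = cmod z * sin (Arg z)"
       "Re w = cmod w * cos (Arg w)" "Im w = cmod w * sin (Arg w)"
    by (metis Re_rcis Im_rcis rcis_cmod_Arg)+
  then show ?thesis
    by (simp add: inner_complex_def cos_diff algebra_simps)
qed

lemma circ_dist_Arg_le_arccos:
  assumes "cmod z = 1" "(cmod (z - w))\<^sup>2 \<le> \<rho>" "\<rho> < 1"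
  shows "circ_dist (Arg z) (Arg w) \<le> arccos (1 - \<rho>)"
proof -
  have "0 \<le> \<rho>" using assms(2) zero_le_power2 order_trans by blast
  have "w \<noteq> 0" using assms by auto
  have "cmod w * (1 - \<rho>) \<le> cmod w * cos (Arg z - Arg w)"
    using inner_ge_of_norm_diff_le[of z w \<rho>] norm_mult_cos_Arg_diff[of z w] assms
    by (simp add: mult.commute)
  with \<open>w \<noteq> 0\<close> have "cos (arccos (1 - \<rho>)) \<le> cos (Arg z - Arg w)"
    using \<open>0 \<le> \<rho>\<close> assms(3) by (simp add: cos_arccos)
  then show ?thesis
    using circ_dist_le_iff_cos arccos_lbound arccos_ubound \<open>0 \<le> \<rho>\<close> assms(3) by simp
qed

lemma cmod_power2_le_of_Re_Im:
  assumes "\<bar>Re u\<bar> \<le> \<alpha>" "\<bar>Im u\<bar> \<le> \<alpha>"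
  shows "(cmod u)\<^sup>2 \<le> 2 * \<alpha>\<^sup>2"
proof -
  have "\<bar>Re u\<bar>\<^sup>2 \<le> \<alpha>\<^sup>2" "\<bar>Im u\<bar>\<^sup>2 \<le> \<alpha>\<^sup>2"
    using assms by (simp_all only: power_mono abs_ge_zero)
  then show ?thesis
    by (simp add: cmod_power2)
qed

lemma arccos_1_minus_2_power2:
  assumes "0 \<le> \<alpha>" "\<alpha> \<le> 1"
  shows "arccos (1 - 2 * \<alpha>\<^sup>2) = 2 * arcsin \<alpha>"
proof -
  have "cos (2 * arcsin \<alpha>) = 1 - 2 * \<alpha>\<^sup>2"
    using assms by (simp add: cos_double_sin)
  moreover have "0 \<le> arcsin \<alpha>" "arcsin \<alpha> \<le> pi / 2"
    using assms arcsin_nonneg[of \<alpha>] arcsin_bounded[of \<alpha>] by simp_all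
  ultimately show ?thesis
    using arccos_cos[of "2 * arcsin \<alpha>"] by simp
qed

theorem theorem5p1:
  fixes x y x0 y0 \<alpha> :: real
  assumes "x\<^sup>2 + y\<^sup>2 = 1"
    and "0 < \<alpha>" and "\<alpha> \<le> 1/2"
    and "\<bar>x - x0\<bar> \<le> \<alpha>" and "\<bar>y - y0\<bar> \<le> \<alpha>"
  shows "circ_dist (polar_angle x y) (polar_angle x0 y0) \<le> arcsin \<alpha> + arcsin (\<alpha> / (1 - \<alpha>))"
proof -
  define z where "z = Complex x y"
  define w where "w = Complex x0 y0"
  have "cmod z = 1"
    using assms(1) by (simp add: z_def cmod_def)
  moreover have "(cmod (z - w))\<^sup>2 \<le> 2 * \<alpha>\<^sup>2"
    using assms(4,5) by (intro cmod_power2_le_of_Re_Im) (simp_all add: z_def w_def)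
  moreover have "2 * \<alpha>\<^sup>2 < 1"
    using assms(2,3) mult_mono[of \<alpha> "1/2" \<alpha> "1/2"] by (simp add: power2_eq_square)
  ultimately have "circ_dist (Arg z) (Arg w) \<le> arccos (1 - 2 * \<alpha>\<^sup>2)"
    by (rule circ_dist_Arg_le_arccos)
  also have "\<dots> = arcsin \<alpha> + arcsin \<alpha>"
    using assms(2,3) by (simp add: arccos_1_minus_2_power2)
  also have "\<dots> \<le> arcsin \<alpha> + arcsin (\<alpha> / (1 - \<alpha>))"
    using assms(2,3) by (intro add_left_mono arcsin_le_arcsin) (simp_all add: field_simps)
  finally show ?thesis
    by (simp add: polar_angle_def z_def w_def)
qed

end
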